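(* Let $X(s,t)=\gamma(s)+\frac{t}{\sqrt2}\bigl(V_2(s)+V_4(s)\bigr)$, $(s,t)\in I\times J$, and suppose $\kappa_2=\kappa_3$ on $I$ and $1-\frac{t}{\sqrt2}\kappa_1(s)\neq0$ on $I\times J$ (so $X$ is an immersion). Then $X$ is flat (its Gaussian curvature vanishes identically) and has flat normal bundle (its normal curvature vanishes identically).
   Context: Let $I,J\subset\mathbb{R}$ be open intervals and $\gamma:I\to\mathbb{R}^4$ a smooth unit-speed curve equipped with a smooth orthonormal frame $(V_1,V_2,V_3,V_4)$ along $\gamma$ and smooth functions $\kappa_1,\kappa_2,\kappa_3:I\to\mathbb{R}$ satisfying the Frenet equations $\gamma'=V_1$, $V_1'=\kappa_1V_2$, $V_2'=-\kappa_1V_1+\kappa_2V_3$, $V_3'=-\kappa_2V_2+\kappa_3V_4$, $V_4'=-\kappa_3V_3$. The normal curvature of a surface in $\mathbb{R}^4$ with orthonormal tangent frame $e_1,e_2$ and orthonormal normal frame $N_1,N_2$ is $K_N=\sum_{j=1}^{2}(h^1_{1j}h^2_{2j}-h^2_{1j}h^1_{2j})$ with $h^k_{ij}=\langle h(e_i,e_j),N_k\rangle$, $h$ the second fundamental form. *)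

theory Defs
  imports "HOL-Analysis.Analysis"
begin

definition smooth_real_on :: "real set \<Rightarrow> (real \<Rightarrow> real) \<Rightarrow> bool" where
  "smooth_real_on I f \<longleftrightarrow> (\<forall>n. \<forall>x\<in>I. ((deriv ^^ n) f) differentiable (at x))"

type_synonym surf = "real \<Rightarrow> real \<Rightarrow> real^4"

definition Xs :: "surf \<Rightarrow> real \<Rightarrow> real \<Rightarrow> real^4" where
  "Xs X s t = vector_derivative (\<lambda>u. X u t) (at s)"
definition Xt :: "surf \<Rightarrow> real \<Rightarrow> real \<Rightarrow> real^4" where
  "Xt X s t = vector_derivative (\<lambda>v. X s v) (at t)"
definition Xss :: "surf \<Rightarrow> real \<Rightarrow> real \<Rightarrow> real^4" where
  "Xss X s t = vector_derivative (\<lambda>u. Xs X u t) (at s)"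
definition Xst :: "surf \<Rightarrow> real \<Rightarrow> real \<Rightarrow> real^4" where
  "Xst X s t = vector_derivative (\<lambda>v. Xs X s v) (at t)"
definition Xtt :: "surf \<Rightarrow> real \<Rightarrow> real \<Rightarrow> real^4" where
  "Xtt X s t = vector_derivative (\<lambda>v. Xt X s v) (at t)"

definition fE where "fE X s t = Xs X s t \<bullet> Xs X s t"
definition fF where "fF X s t = Xs X s t \<bullet> Xt X s t"
definition fG where "fG X s t = Xt X s t \<bullet> Xt X s t"

text \<open>Orthogonal projection onto the normal space (orthogonal complement of span(X_s, X_t)).\<close>
definition nproj :: "surf \<Rightarrow> real \<Rightarrow> real \<Rightarrow> real^4 \<Rightarrow> real^4" where
  "nproj X s t w = w - (1 / (fE X s t * fG X s t - (fF X s t)\<^sup>2)) *\<^sub>R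
     ((fG X s t * (w \<bullet> Xs X s t) - fF X s t * (w \<bullet> Xt X s t)) *\<^sub>R Xs X s t
      + (fE X s t * (w \<bullet> Xt X s t) - fF X s t * (w \<bullet> Xs X s t)) *\<^sub>R Xt X s t)"

text \<open>Second fundamental form h(u,v), where the tangent vectors are
  u = a1 X_s + a2 X_t and v = b1 X_s + b2 X_t (given by coefficients).\<close>
definition sff :: "surf \<Rightarrow> real \<Rightarrow> real \<Rightarrow> real \<times> real \<Rightarrow> real \<times> real \<Rightarrow> real^4" where
  "sff X s t a b = nproj X s t
     ((fst a * fst b) *\<^sub>R Xss X s t + (fst a * snd b + snd a * fst b) *\<^sub>R Xst X s t
      + (snd a * snd b) *\<^sub>R Xtt X s t)"

definition tvec :: "surf \<Rightarrow> real \<Rightarrow> real \<Rightarrow> real \<times> real \<Rightarrow> real^4" where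
  "tvec X s t a = fst a *\<^sub>R Xs X s t + snd a *\<^sub>R Xt X s t"

definition adapted_frame :: "surf \<Rightarrow> real \<Rightarrow> real \<Rightarrow> real \<times> real \<Rightarrow> real \<times> real
    \<Rightarrow> real^4 \<Rightarrow> real^4 \<Rightarrow> bool" where
  "adapted_frame X s t e1 e2 N1 N2 \<longleftrightarrow>
     tvec X s t e1 \<bullet> tvec X s t e1 = 1 \<and> tvec X s t e2 \<bullet> tvec X s t e2 = 1 \<and>
     tvec X s t e1 \<bullet> tvec X s t e2 = 0 \<and>
     N1 \<bullet> N1 = 1 \<and> N2 \<bullet> N2 = 1 \<and> N1 \<bullet> N2 = 0 \<and>
     N1 \<bullet> Xs X s t = 0 \<and> N1 \<bullet> Xt X s t = 0 \<and>
     N2 \<bullet> Xs X s t = 0 \<and> N2 \<bullet> Xt X s t = 0"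

definition hc :: "surf \<Rightarrow> real \<Rightarrow> real \<Rightarrow> real \<times> real \<Rightarrow> real \<times> real \<Rightarrow> real^4 \<Rightarrow> real" where
  "hc X s t ei ej Nk = sff X s t ei ej \<bullet> Nk"

text \<open>Gaussian curvature (Gauss equation): K = sum_k (h^k_11 h^k_22 - (h^k_12)^2).\<close>
definition gauss_curv :: "surf \<Rightarrow> real \<Rightarrow> real \<Rightarrow> real \<times> real \<Rightarrow> real \<times> real
    \<Rightarrow> real^4 \<Rightarrow> real^4 \<Rightarrow> real" where
  "gauss_curv X s t e1 e2 N1 N2 =
     (\<Sum>N\<leftarrow>[N1, N2]. hc X s t e1 e1 N * hc X s t e2 e2 N - (hc X s t e1 e2 N)\<^sup>2)"

definition normal_curv :: "surf \<Rightarrow> real \<Rightarrow> real \<Rightarrow> real \<times> real \<Rightarrow> real \<times> real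
    \<Rightarrow> real^4 \<Rightarrow> real^4 \<Rightarrow> real" where
  "normal_curv X s t e1 e2 N1 N2 =
     (\<Sum>ej\<leftarrow>[e1, e2]. hc X s t e1 ej N1 * hc X s t e2 ej N2 - hc X s t e1 ej N2 * hc X s t e2 ej N1)"

end

theory Submission
  imports Defs
begin

text \<open>
  X is a ruled surface with rulings in the direction D = (V2 + V4)/sqrt 2. By the Frenet
  equations D' = (-\<kappa>1 V1 + (\<kappa>2 - \<kappa>3) V3)/sqrt 2, which for \<kappa>2 = \<kappa>3 is a multiple of
  V1 and hence of X_s = (1 - t \<kappa>1/sqrt 2) V1. So X_tt = 0 and X_st is tangent: the second
  fundamental form vanishes as soon as one argument is X_t, i.e. h(u, v) = u1 v1 n for a
  single normal vector n. For such a rank-one form both the Gauss and the normal curvature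
  are determinants that vanish identically.
\<close>

definition ruled_surface :: "(real \<Rightarrow> real^4) \<Rightarrow> (real \<Rightarrow> real^4) \<Rightarrow> surf" where
  "ruled_surface c D s t = c s + t *\<^sub>R D s"

lemma Xt_ruled_surface: "Xt (ruled_surface c D) s t = D s"
proof -
  have "((\<lambda>v. ruled_surface c D s v) has_vector_derivative D s) (at t)"
    unfolding ruled_surface_def
    by (auto intro!: derivative_eq_intros simp: has_vector_derivative_def)
  then show ?thesis
    unfolding Xt_def by (rule vector_derivative_at)
qed

lemma Xtt_ruled_surface: "Xtt (ruled_surface c D) s t = 0"
  unfolding Xtt_def Xt_ruled_surface by simp

lemma Xs_ruled_surface:
  assumes "(c has_vector_derivative c') (at s)" and "(D has_vector_derivative D') (at s)"
  shows "Xs (ruled_surface c D) s t = c' + t *\<^sub>R D'"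
proof -
  have "((\<lambda>u. ruled_surface c D u t) has_vector_derivative c' + t *\<^sub>R D') (at s)"
    unfolding ruled_surface_def
    by (intro has_vector_derivative_add assms
        bounded_linear.has_vector_derivative[OF bounded_linear_scaleR_right])
  then show ?thesis
    unfolding Xs_def by (rule vector_derivative_at)
qed

lemma Xst_ruled_surface:
  assumes "(c has_vector_derivative c') (at s)" and "(D has_vector_derivative D') (at s)"
  shows "Xst (ruled_surface c D) s t = D'"
proof -
  have "((\<lambda>v. c' + v *\<^sub>R D') has_vector_derivative D') (at t)"
    by (auto intro!: derivative_eq_intros simp: has_vector_derivative_def)
  moreover have "Xs (ruled_surface c D) s = (\<lambda>v. c' + v *\<^sub>R D')"
    using Xs_ruled_surface[OF assms] by blast
  ultimately show ?thesis
    unfolding Xst_def by (simp add: vector_derivative_at)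
qed

lemma linear_nproj: "linear (nproj X s t)"
  by unfold_locales
    (simp_all add: nproj_def inner_add_left algebra_simps scaleR_add_right)

lemma nproj_Xs:
  assumes "fE X s t * fG X s t - (fF X s t)\<^sup>2 \<noteq> 0"
  shows "nproj X s t (Xs X s t) = 0"
  using assms
  by (simp add: nproj_def fE_def[symmetric] fF_def[symmetric] inner_commute mult.commute power2_eq_square)

lemma sff_rank_one:
  assumes "Xtt X s t = 0" and "Xst X s t = \<mu> *\<^sub>R Xs X s t"
    and "fE X s t * fG X s t - (fF X s t)\<^sup>2 \<noteq> 0"
  shows "sff X s t a b = (fst a * fst b) *\<^sub>R nproj X s t (Xss X s t)"
proof -
  interpret nproj: linear "nproj X s t" by (rule linear_nproj)
  show ?thesis
    using assms nproj_Xs[OF assms(3)] by (simp add: sff_def nproj.add nproj.scale)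
qed

lemma gauss_curv_normal_curv_eq_0_if_sff_rank_one:
  assumes "\<And>a b. sff X s t a b = (fst a * fst b) *\<^sub>R n"
  shows "gauss_curv X s t e1 e2 N1 N2 = 0 \<and> normal_curv X s t e1 e2 N1 N2 = 0"
  by (simp add: gauss_curv_def normal_curv_def hc_def assms power2_eq_square algebra_simps)

theorem corollary9:
  fixes I J :: "real set"
    and \<gamma> V1 V2 V3 V4 :: "real \<Rightarrow> real^4"
    and \<kappa>1 \<kappa>2 \<kappa>3 :: "real \<Rightarrow> real"
  assumes "open I" "is_interval I" "open J" "is_interval J"
    and "smooth_real_on I \<kappa>1" "smooth_real_on I \<kappa>2" "smooth_real_on I \<kappa>3"
    and orthonormal: "\<forall>s\<in>I. V1 s \<bullet> V1 s = 1 \<and> V2 s \<bullet> V2 s = 1 \<and> V3 s \<bullet> V3 s = 1 \<and> V4 s \<bullet> V4 s = 1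
        \<and> V1 s \<bullet> V2 s = 0 \<and> V1 s \<bullet> V3 s = 0 \<and> V1 s \<bullet> V4 s = 0
        \<and> V2 s \<bullet> V3 s = 0 \<and> V2 s \<bullet> V4 s = 0 \<and> V3 s \<bullet> V4 s = 0"
    and frenet: "\<forall>s\<in>I.
        (\<gamma> has_vector_derivative V1 s) (at s) \<and>
        (V1 has_vector_derivative (\<kappa>1 s *\<^sub>R V2 s)) (at s) \<and>
        (V2 has_vector_derivative (- \<kappa>1 s *\<^sub>R V1 s + \<kappa>2 s *\<^sub>R V3 s)) (at s) \<and>
        (V3 has_vector_derivative (- \<kappa>2 s *\<^sub>R V2 s + \<kappa>3 s *\<^sub>R V4 s)) (at s) \<and>
        (V4 has_vector_derivative (- \<kappa>3 s *\<^sub>R V3 s)) (at s)"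
    and k23: "\<forall>s\<in>I. \<kappa>2 s = \<kappa>3 s"
    and imm: "\<forall>s\<in>I. \<forall>t\<in>J. 1 - t / sqrt 2 * \<kappa>1 s \<noteq> 0"
  defines "X \<equiv> \<lambda>s t. \<gamma> s + (t / sqrt 2) *\<^sub>R (V2 s + V4 s)"
  shows "\<forall>s\<in>I. \<forall>t\<in>J. \<forall>e1 e2 N1 N2. adapted_frame X s t e1 e2 N1 N2 \<longrightarrow>
           gauss_curv X s t e1 e2 N1 N2 = 0 \<and> normal_curv X s t e1 e2 N1 N2 = 0"
proof (intro ballI allI impI)
  fix s t e1 e2 N1 N2
  assume s: "s \<in> I" and t: "t \<in> J"
  define D where "D u = (1 / sqrt 2) *\<^sub>R (V2 u + V4 u)" for u
  have X_ruled: "X = ruled_surface \<gamma> D"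
    by (simp add: X_def D_def ruled_surface_def fun_eq_iff)
  have D': "(D has_vector_derivative (- \<kappa>1 s / sqrt 2) *\<^sub>R V1 s) (at s)"
  proof -
    have "(D has_vector_derivative (1 / sqrt 2) *\<^sub>R
        ((- \<kappa>1 s *\<^sub>R V1 s + \<kappa>2 s *\<^sub>R V3 s) + - \<kappa>3 s *\<^sub>R V3 s)) (at s)"
      unfolding D_def using frenet s
      by (intro bounded_linear.has_vector_derivative[OF bounded_linear_scaleR_right]
          has_vector_derivative_add) auto
    then show ?thesis
      using k23 s by (simp add: algebra_simps)
  qed
  have \<gamma>': "(\<gamma> has_vector_derivative V1 s) (at s)"
    using frenet s by blast
  have Xt: "Xt X s t = D s"
    by (simp add: X_ruled Xt_ruled_surface)
  define a where "a = 1 - t / sqrt 2 * \<kappa>1 s"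
  have "a \<noteq> 0" using imm s t by (simp add: a_def)
  have Xs: "Xs X s t = a *\<^sub>R V1 s"
    using Xs_ruled_surface[OF \<gamma>' D'] by (simp add: X_ruled a_def algebra_simps)
  have Xtt: "Xtt X s t = 0"
    by (simp add: X_ruled Xtt_ruled_surface)
  have Xst: "Xst X s t = (- \<kappa>1 s / sqrt 2 / a) *\<^sub>R Xs X s t"
    unfolding Xs using Xst_ruled_surface[OF \<gamma>' D'] \<open>a \<noteq> 0\<close> by (simp add: X_ruled)
  have "fE X s t * fG X s t - (fF X s t)\<^sup>2 = a\<^sup>2"
    unfolding fE_def fF_def fG_def Xs Xt D_def
    using orthonormal s
    by (simp add: inner_add_left inner_add_right inner_commute power2_eq_square[symmetric])
  with \<open>a \<noteq> 0\<close> have "fE X s t * fG X s t - (fF X s t)\<^sup>2 \<noteq> 0"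
    by simp
  from sff_rank_one[OF Xtt Xst this]
  show "gauss_curv X s t e1 e2 N1 N2 = 0 \<and> normal_curv X s t e1 e2 N1 N2 = 0"
    by (rule gauss_curv_normal_curv_eq_0_if_sff_rank_one)
qed

end
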